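(* Assume $f:\mathbb{R}^n\to\mathbb{R}$ is convex with bounded level sets, and there exist $M_1,M_2>0$ such that $\|v\|\le M_1\|x\|+M_2$ for all $x\in\mathbb{R}^n$ and all $v\in\partial f(x)$. Let $\gamma_k,\delta_k,s_k>0$ for all $k$. Let $B>0$ be such that $\|x^*\|\le B$ and $\|v\|\le B$ for all $x^*\in X^*$ and all $v\in\partial f(x^* )$, and let $\rho\in[0,1]$ be arbitrary. Then the iterates of the random incremental penalty method surely satisfy, for all $x^*\in X^*$ and $k\ge1$, $$\begin{aligned}\|x_{k+1}-x^*\|^2\le{}&(1+4s_k^2M_1^2)\|x_k-x^*\|^2+2s_k\big((1-\rho)B+\rho(M_1B+M_2)\big)\mathrm{dist}(x_k,X)\\&+2s_k\rho\big(f^*-f(\Pi_X[x_k])\big)+2s_k\rho M_1\|x_k-x^*\|\,\mathrm{dist}(x_k,X)\\&+\frac{s_k\gamma_k\delta_k}{2\alpha_{\min}}-2s_k\gamma_k\,\mathrm{dist}(x_k,X_{i_k})+4s_k^2\big(M_1^2B^2+M_2^2+\gamma_k^2\big).\end{aligned}$$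
   Context: Let $a_1,\dots,a_m\in\mathbb{R}^n$ be nonzero vectors and $b_1,\dots,b_m\in\mathbb{R}$; $X_i=\{x:\langle a_i,x\rangle-b_i\le0\}$, $X=\bigcap_{i=1}^mX_i$ (assumed nonempty), $\alpha_{\min}=\min_i\|a_i\|$; $\Pi_X$ is the Euclidean projection onto $X$. $X^*$ and $f^*$ are the solution set and optimal value of $\min_{x\in X}f(x)$. For $\delta>0$, nonzero $a$ and scalar $b$: $h_\delta(x;a,b)=\frac{\langle a,x\rangle-b}{\|a\|}$ if $\langle a,x\rangle-b>\delta$, $\frac{(\langle a,x\rangle-b+\delta)^2}{4\delta\|a\|}$ if $-\delta\le\langle a,x\rangle-b\le\delta$, $0$ if $\langle a,x\rangle-b<-\delta$; its gradient is $\nabla h_\delta(x;a,b)=\frac{1}{\|a\|}p'_\delta(\langle a,x\rangle-b)\,a$ with $p'_\delta(s)=1$ for $s>\delta$, $\frac{s+\delta}{2\delta}$ for $|s|\le\delta$, $0$ for $s<-\delta$. Random incremental penalty method: from an initial point $x_1$, for $k\ge1$, $x_{k+1}=x_k-s_k\big[\tilde\nabla f(x_k)+\gamma_k\nabla h_{\delta_k}(x_k;a_{i_k},b_{i_k})\big]$, where $\tilde\nabla f(x_k)\in\partial f(x_k)$ and $i_k\in\{1,\dots,m\}$ is chosen uniformly at random. *)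

theory Defs
  imports "HOL-Analysis.Analysis"
begin

definition subdiff :: "('a::real_inner \<Rightarrow> real) \<Rightarrow> 'a \<Rightarrow> 'a set" where
  "subdiff f x = {v. \<forall>y. f y \<ge> f x + inner v (y - x)}"

definition halfspace :: "'a::real_inner \<Rightarrow> real \<Rightarrow> 'a set" where
  "halfspace a b = {x. inner a x - b \<le> 0}"

definition feas :: "nat \<Rightarrow> (nat \<Rightarrow> 'a::real_inner) \<Rightarrow> (nat \<Rightarrow> real) \<Rightarrow> 'a set" where
  "feas m a b = (\<Inter>i\<in>{1..m}. halfspace (a i) (b i))"

definition optval :: "('a \<Rightarrow> real) \<Rightarrow> 'a set \<Rightarrow> real" where
  "optval f X = (INF x\<in>X. f x)"

definition optset :: "('a \<Rightarrow> real) \<Rightarrow> 'a set \<Rightarrow> 'a set" where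
  "optset f X = {x\<in>X. \<forall>y\<in>X. f x \<le> f y}"

text \<open>Derivative of the smoothing p_delta.\<close>
definition dp :: "real \<Rightarrow> real \<Rightarrow> real" where
  "dp \<delta> s = (if s > \<delta> then 1 else if s < - \<delta> then 0 else (s + \<delta>) / (2 * \<delta>))"

definition hpen :: "real \<Rightarrow> 'a::real_inner \<Rightarrow> real \<Rightarrow> 'a \<Rightarrow> real" where
  "hpen \<delta> a b x = (let t = inner a x - b in
     if t > \<delta> then t / norm a
     else if t < - \<delta> then 0
     else (t + \<delta>)\<^sup>2 / (4 * \<delta> * norm a))"

definition grad_hpen :: "real \<Rightarrow> 'a::real_inner \<Rightarrow> real \<Rightarrow> 'a \<Rightarrow> 'a" where
  "grad_hpen \<delta> a b x = (dp \<delta> (inner a x - b) / norm a) *\<^sub>R a"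

end

theory Submission
  imports Defs
begin

text \<open>Write \<open>e = x\<^sub>k - x\<^sup>*\<close>, \<open>g = g\<^sub>k\<close> and \<open>h = \<nabla>h\<^sub>\<delta>(x\<^sub>k; a\<^sub>i, b\<^sub>i)\<close>, so that
  \<open>\<parallel>x\<^sub>k\<^sub>+\<^sub>1 - x\<^sup>*\<parallel>\<^sup>2 = \<parallel>e\<parallel>\<^sup>2 - 2s\<langle>g,e\<rangle> - 2s\<gamma>\<langle>h,e\<rangle> + s\<^sup>2\<parallel>g + \<gamma>h\<parallel>\<^sup>2\<close>.
  Convexity gives \<open>-\<langle>g,e\<rangle> \<le> f(x\<^sup>*) - f(x\<^sub>k)\<close>, and this gap is bounded in two ways: by
  \<open>B dist(x\<^sub>k,X)\<close>, using a subgradient at \<open>x\<^sup>*\<close> satisfying the optimality condition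
  \<open>\<langle>v, y - x\<^sup>*\<rangle> \<ge> 0\<close> on \<open>X\<close> (obtained by separating the epigraph of \<open>f\<close> from
  \<open>X \<times> (-\<infinity>, f(x\<^sup>*))\<close>); and by \<open>f\<^sup>* - f(\<Pi>\<^sub>X x\<^sub>k)\<close> plus a subgradient bound at \<open>\<Pi>\<^sub>X x\<^sub>k\<close>.
  The \<open>\<rho>\<close>-convex combination of the two bounds gives the \<open>\<rho>\<close>-terms. Since \<open>x\<^sup>* \<in> X\<^sub>i\<close>, the
  penalty term satisfies \<open>\<langle>h,e\<rangle> \<ge> p'\<^sub>\<delta>(t) t / \<parallel>a\<^sub>i\<parallel>\<close> with \<open>t = \<langle>a\<^sub>i,x\<^sub>k\<rangle> - b\<^sub>i\<close>, and
  \<open>max t 0 - p'\<^sub>\<delta>(t) t \<le> \<delta>/4\<close> while \<open>dist(x\<^sub>k,X\<^sub>i) \<le> max t 0 / \<parallel>a\<^sub>i\<parallel>\<close>. Finally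
  \<open>\<parallel>g\<parallel> \<le> M\<^sub>1\<parallel>e\<parallel> + M\<^sub>1B + M\<^sub>2\<close> and \<open>\<parallel>h\<parallel> \<le> 1\<close>, and a sum of four reals squared is at most
  four times the sum of their squares.\<close>

lemma subdiff_optimality:
  fixes f :: "'a::euclidean_space \<Rightarrow> real"
  assumes f: "convex_on UNIV f" and X: "convex X" "x0 \<in> X"
    and min: "\<And>y. y \<in> X \<Longrightarrow> f x0 \<le> f y"
  obtains v where "v \<in> subdiff f x0" "\<And>y. y \<in> X \<Longrightarrow> inner v (y - x0) \<ge> 0"
proof -
  define S where "S = epigraph UNIV f"
  define T where "T = X \<times> {..< f x0}"
  have "convex S" unfolding S_def using f by (rule convex_epigraphI)
  moreover have "convex T" unfolding T_def by (intro convex_Times X convex_real_interval)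
  moreover have "(x0, f x0) \<in> S" unfolding S_def epigraph_def by auto
  moreover have "(x0, f x0 - 1) \<in> T" unfolding T_def using X by auto
  moreover have "S \<inter> T = {}" unfolding S_def T_def epigraph_def using min by fastforce
  ultimately obtain wc \<beta> where wc: "wc \<noteq> 0"
    and hS: "\<forall>z\<in>S. inner wc z \<le> \<beta>" and hT: "\<forall>z\<in>T. inner wc z \<ge> \<beta>"
    using separating_hyperplane_sets by (metis empty_iff)
  obtain w c where wc_eq: "wc = (w, c)" by (cases wc)
  have S: "inner w y + c * r \<le> \<beta>" if "f y \<le> r" for y r
    using hS that unfolding S_def epigraph_def wc_eq by auto
  have T: "inner w y + c * r \<ge> \<beta>" if "y \<in> X" "r < f x0" for y r
    using hT that unfolding T_def wc_eq by auto
  have "c \<le> 0" using S[of x0 "f x0"] T[OF X(2), of "f x0 - 1"] by (auto simp: algebra_simps)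
  moreover have "c \<noteq> 0"
  proof
    assume "c = 0"
    then have "inner w (x0 + w) \<le> inner w x0"
      using S[of "x0 + w" "f (x0 + w)"] T[OF X(2), of "f x0 - 1"] by auto
    then have "w = 0" by (simp add: inner_add_right) (metis inner_gt_zero_iff not_less)
    with \<open>c = 0\<close> wc show False by (simp add: wc_eq zero_prod_def)
  qed
  ultimately have c: "c < 0" by simp
  have T_lim: "f x0 \<le> (\<beta> - inner w y) / c" if "y \<in> X" for y
  proof (rule dense_le)
    fix r assume "r < f x0"
    with T[OF that this] c show "r \<le> (\<beta> - inner w y) / c"
      by (simp add: neg_le_divide_eq algebra_simps)
  qed
  define v where "v = (- 1 / c) *\<^sub>R w"
  have v_inner: "inner v (y - x0) = (inner w x0 - inner w y) / c" for y
    unfolding v_def using c by (simp add: inner_diff_right field_simps)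
  show thesis
  proof
    show "v \<in> subdiff f x0"
      unfolding subdiff_def
    proof clarify
      fix y
      have "inner w y + c * f y \<le> inner w x0 + c * f x0"
        using S[of y "f y"] T_lim[OF X(2)] c by (simp add: neg_le_divide_eq algebra_simps)
      then have "(inner w x0 - inner w y) / c \<le> f y - f x0"
        unfolding neg_divide_le_eq[OF c] by (simp add: algebra_simps)
      then show "f x0 + inner v (y - x0) \<le> f y" unfolding v_inner by simp
    qed
    show "inner v (y - x0) \<ge> 0" if "y \<in> X" for y
      using S[of x0 "f x0"] T_lim[OF that] c unfolding v_inner
      by (simp add: neg_le_divide_eq divide_nonneg_neg algebra_simps)
  qed
qed

lemma subdiff_nonempty:
  fixes f :: "'a::euclidean_space \<Rightarrow> real"
  assumes "convex_on UNIV f"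
  obtains v where "v \<in> subdiff f x"
  using subdiff_optimality[OF assms convex_singleton[of x]] by blast

lemma halfspace_eq_le: "halfspace a b = {x. inner a x \<le> b}"
  unfolding halfspace_def by auto

lemma closed_feas: "closed (feas m a b)"
  unfolding feas_def halfspace_eq_le by (intro closed_INT ballI closed_halfspace_le)

lemma convex_feas: "convex (feas m a b)"
  unfolding feas_def halfspace_eq_le by (intro convex_INT ballI convex_halfspace_le)

lemma infdist_halfspace_le:
  assumes "a \<noteq> 0"
  shows "infdist x (halfspace a b) \<le> max (inner a x - b) 0 / norm a"
proof (cases "inner a x \<le> b")
  case True
  then show ?thesis by (simp add: halfspace_eq_le)
next
  case False
  define t where "t = inner a x - b"
  define y where "y = x - (t / (norm a)\<^sup>2) *\<^sub>R a"
  have "y \<in> halfspace a b"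
    unfolding halfspace_eq_le y_def t_def using assms
    by (simp add: inner_diff_right power2_norm_eq_inner)
  then have "infdist x (halfspace a b) \<le> dist x y" by (rule infdist_le)
  also have "dist x y = \<bar>t\<bar> / norm a"
    unfolding y_def dist_norm using assms by (simp add: power2_eq_square)
  finally show ?thesis using False t_def by simp
qed

lemma dp_bounds:
  assumes "\<delta> > 0"
  shows "0 \<le> dp \<delta> t" "dp \<delta> t \<le> 1"
  using assms unfolding dp_def by (auto simp: field_simps)

lemma norm_grad_hpen_le: "\<delta> > 0 \<Longrightarrow> a \<noteq> 0 \<Longrightarrow> norm (grad_hpen \<delta> a b x) \<le> 1"
  unfolding grad_hpen_def using dp_bounds[of \<delta> "inner a x - b"] by simp

lemma max_minus_dp_mult_le:
  assumes \<delta>: "\<delta> > 0"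
  shows "max t 0 - dp \<delta> t * t \<le> \<delta> / 4"
proof -
  consider "t > \<delta>" | "t < - \<delta>" | "- \<delta> \<le> t" "t \<le> \<delta>" by linarith
  then show ?thesis
  proof cases
    case 3
    then have "2 * \<delta> * (max t 0 - dp \<delta> t * t) = 2 * \<delta> * max t 0 - (t + \<delta>) * t"
      using \<delta> by (simp add: dp_def field_simps)
    also have "\<dots> \<le> \<delta> * \<delta> / 4"
    proof -
      have "0 \<le> (t + \<delta> / 2)\<^sup>2" "0 \<le> (t - \<delta> / 2)\<^sup>2" by simp_all
      then show ?thesis by (cases "t \<le> 0") (simp_all add: max_def power2_eq_square algebra_simps)
    qed
    also have "\<dots> \<le> 2 * \<delta> * (\<delta> / 4)" using \<delta> by simp
    finally show ?thesis by (rule mult_left_le_imp_le) (use \<delta> in simp)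
  qed (use \<delta> in \<open>auto simp: dp_def\<close>)
qed

lemma infdist_halfspace_le_inner_grad_hpen:
  assumes a: "a \<noteq> 0" and \<delta>: "\<delta> > 0" and x': "x' \<in> halfspace a b"
  shows "infdist x (halfspace a b) \<le> inner (grad_hpen \<delta> a b x) (x - x') + \<delta> / (4 * norm a)"
proof -
  define t where "t = inner a x - b"
  have N: "norm a > 0" using a by simp
  have "dp \<delta> t * t / norm a \<le> dp \<delta> t / norm a * (inner a x - inner a x')"
    using x' dp_bounds(1)[OF \<delta>, of t] N unfolding t_def halfspace_eq_le
    by (simp add: mult_left_mono divide_right_mono)
  also have "\<dots> = inner (grad_hpen \<delta> a b x) (x - x')"
    unfolding grad_hpen_def t_def by (simp add: inner_diff_right right_diff_distrib diff_divide_distrib)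
  finally have inner: "dp \<delta> t * t / norm a \<le> inner (grad_hpen \<delta> a b x) (x - x')" .
  have "max t 0 / norm a \<le> dp \<delta> t * t / norm a + \<delta> / (4 * norm a)"
    using max_minus_dp_mult_le[OF \<delta>, of t] N by (simp add: field_simps)
  with infdist_halfspace_le[OF a, of x b] inner show ?thesis unfolding t_def by linarith
qed

lemma sum4_sq_le:
  fixes p q r u :: real
  shows "(p + q + r + u)\<^sup>2 \<le> 4 * (p\<^sup>2 + q\<^sup>2 + r\<^sup>2 + u\<^sup>2)"
proof -
  have "0 \<le> (p - q)\<^sup>2 + (p - r)\<^sup>2 + (p - u)\<^sup>2 + (q - r)\<^sup>2 + (q - u)\<^sup>2 + (r - u)\<^sup>2" by simp
  then show ?thesis by (simp add: power2_eq_square algebra_simps)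
qed

lemma norm_add_scaleR_sq_le:
  fixes G h y x' :: "'a::real_normed_vector"
  assumes G: "norm G \<le> M1 * norm y + M2" and M1: "M1 \<ge> 0" and x': "norm x' \<le> B"
    and h: "norm h \<le> 1" and \<gamma>: "\<gamma> \<ge> 0"
  shows "(norm (G + \<gamma> *\<^sub>R h))\<^sup>2 \<le> 4 * M1\<^sup>2 * (norm (y - x'))\<^sup>2 + 4 * (M1\<^sup>2 * B\<^sup>2 + M2\<^sup>2 + \<gamma>\<^sup>2)"
proof -
  have "norm y \<le> norm (y - x') + B" using norm_triangle_sub[of y x'] x' by simp
  then have "norm G \<le> M1 * norm (y - x') + M1 * B + M2"
    using G M1 by (smt (verit) distrib_left mult_left_mono)
  moreover have "norm (\<gamma> *\<^sub>R h) \<le> \<gamma>" using h \<gamma> by (simp add: mult_left_le)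
  ultimately have "norm (G + \<gamma> *\<^sub>R h) \<le> M1 * norm (y - x') + M1 * B + M2 + \<gamma>"
    using norm_triangle_ineq[of G "\<gamma> *\<^sub>R h"] by linarith
  then have "(norm (G + \<gamma> *\<^sub>R h))\<^sup>2 \<le> (M1 * norm (y - x') + M1 * B + M2 + \<gamma>)\<^sup>2"
    by (rule power_mono) simp
  also have "\<dots> \<le> 4 * ((M1 * norm (y - x'))\<^sup>2 + (M1 * B)\<^sup>2 + M2\<^sup>2 + \<gamma>\<^sup>2)"
    by (rule sum4_sq_le)
  finally show ?thesis by (simp add: power_mult_distrib algebra_simps)
qed

lemma optval_eq_optset:
  assumes "x \<in> optset f X"
  shows "optval f X = f x"
  unfolding optval_def
proof (rule antisym)
  have "x \<in> X" and min: "\<And>y. y \<in> X \<Longrightarrow> f x \<le> f y" using assms unfolding optset_def by auto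
  then show "(INF y\<in>X. f y) \<le> f x" by (intro cINF_lower bdd_belowI2) auto
  show "f x \<le> (INF y\<in>X. f y)" using \<open>x \<in> X\<close> min by (intro cINF_greatest) auto
qed

lemma infdist_eq_dist_closest_point:
  "closed S \<Longrightarrow> S \<noteq> {} \<Longrightarrow> infdist x S = dist x (closest_point S x)"
  by (simp add: infdist_eq_setdist setdist_closest_point)

lemma subdiff_gap_le:
  assumes "v \<in> subdiff f z"
  shows "f z - f y \<le> norm v * dist y z"
proof -
  have "f z + inner v (y - z) \<le> f y" using assms unfolding subdiff_def by blast
  moreover have "- inner v (y - z) \<le> norm v * dist y z"
    using Cauchy_Schwarz_ineq2[of v "y - z"] by (simp add: dist_norm)
  ultimately show ?thesis by linarith
qed

lemma optimal_gap_le_infdist: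
  fixes f :: "'a::euclidean_space \<Rightarrow> real"
  assumes f: "convex_on UNIV f" and X: "closed X" "convex X" and opt: "x' \<in> optset f X"
    and bound: "\<And>v. v \<in> subdiff f x' \<Longrightarrow> norm v \<le> B"
  shows "f x' - f y \<le> B * infdist y X"
proof -
  have x': "x' \<in> X" and min: "\<And>z. z \<in> X \<Longrightarrow> f x' \<le> f z"
    using opt unfolding optset_def by auto
  obtain v where v: "v \<in> subdiff f x'" and var: "\<And>z. z \<in> X \<Longrightarrow> inner v (z - x') \<ge> 0"
    using subdiff_optimality[OF f X(2) x' min] by blast
  define p where "p = closest_point X y"
  have p: "p \<in> X" unfolding p_def using X(1) x' by (auto intro: closest_point_in_set)
  have dist_p: "dist y p = infdist y X"
    unfolding p_def using X(1) x' by (metis empty_iff infdist_eq_dist_closest_point)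
  have "f x' + inner v (y - x') \<le> f y" using v unfolding subdiff_def by blast
  moreover have "inner v (y - x') = inner v (y - p) + inner v (p - x')"
    by (simp add: inner_diff_right)
  moreover have "- inner v (y - p) \<le> B * infdist y X"
    unfolding dist_p[symmetric]
    using Cauchy_Schwarz_ineq2[of v "y - p"] bound[OF v] zero_le_dist[of y p]
    by (smt (verit, best) dist_norm mult_right_mono)
  ultimately show ?thesis using var[OF p] by linarith
qed

lemma closest_point_gap_le:
  fixes f :: "'a::euclidean_space \<Rightarrow> real"
  assumes f: "convex_on UNIV f" and X: "closed X" "convex X" "x' \<in> X"
    and growth: "\<And>z v. v \<in> subdiff f z \<Longrightarrow> norm v \<le> M1 * norm z + M2" and M1: "M1 \<ge> 0"
  shows "f (closest_point X y) - f y \<le> (M1 * (norm (y - x') + norm x') + M2) * infdist y X"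
proof -
  define p where "p = closest_point X y"
  obtain w where w: "w \<in> subdiff f p" using subdiff_nonempty[OF f] by blast
  have "norm (p - x') \<le> norm (y - x')"
    using closest_point_lipschitz[OF X(2,1), of y x'] closest_point_self[OF X(3)] X
    unfolding p_def dist_norm by auto
  then have "norm p \<le> norm (y - x') + norm x'" using norm_triangle_sub[of p x'] by linarith
  then have "norm w \<le> M1 * (norm (y - x') + norm x') + M2"
    using growth[OF w] M1 by (smt (verit) mult_left_mono)
  moreover have "dist y p = infdist y X"
    unfolding p_def using X(1,3) by (metis empty_iff infdist_eq_dist_closest_point)
  ultimately show ?thesis
    using subdiff_gap_le[OF w, of y] zero_le_dist[of y p] unfolding p_def
    by (smt (verit, best) mult_right_mono)
qed

lemma neg_inner_subgrad_le:
  fixes f :: "'a::euclidean_space \<Rightarrow> real"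
  assumes f: "convex_on UNIV f" and X: "closed X" "convex X" and opt: "x' \<in> optset f X"
    and x'_bound: "norm x' \<le> B" and subgrad_bound: "\<And>v. v \<in> subdiff f x' \<Longrightarrow> norm v \<le> B"
    and growth: "\<And>z v. v \<in> subdiff f z \<Longrightarrow> norm v \<le> M1 * norm z + M2" and M1: "M1 \<ge> 0"
    and \<rho>: "0 \<le> \<rho>" "\<rho> \<le> 1" and g: "g \<in> subdiff f y"
  shows "- inner g (y - x') \<le> ((1 - \<rho>) * B + \<rho> * (M1 * B + M2)) * infdist y X
    + \<rho> * (optval f X - f (closest_point X y)) + \<rho> * M1 * norm (y - x') * infdist y X"
proof -
  define D where "D = infdist y X"
  define p where "p = closest_point X y"
  have x': "x' \<in> X" using opt unfolding optset_def by auto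
  have "f y + inner g (x' - y) \<le> f x'" using g unfolding subdiff_def by blast
  then have "- inner g (y - x') \<le> f x' - f y" by (simp add: inner_diff_right)
  also have "\<dots> = (1 - \<rho>) * (f x' - f y) + \<rho> * ((f p - f y) + (f x' - f p))"
    by (simp add: algebra_simps)
  also have "\<dots> \<le> (1 - \<rho>) * (B * D) + \<rho> * ((M1 * (norm (y - x') + norm x') + M2) * D + (f x' - f p))"
    unfolding D_def p_def using \<rho>
    by (intro add_mono mult_left_mono optimal_gap_le_infdist[OF f X opt subgrad_bound]
        closest_point_gap_le[OF f X x' growth M1]) auto
  also have "\<dots> \<le> (1 - \<rho>) * (B * D) + \<rho> * ((M1 * (norm (y - x') + B) + M2) * D + (f x' - f p))"
    using x'_bound M1 \<rho> infdist_nonneg[of y X] unfolding D_def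
    by (intro add_mono mult_left_mono mult_right_mono order_refl) auto
  finally show ?thesis
    unfolding optval_eq_optset[OF opt] D_def[symmetric] p_def[symmetric] by (simp add: algebra_simps)
qed

lemma norm_step_sq_le:
  fixes e G h :: "'a::real_inner"
  assumes s: "s \<ge> 0" and \<gamma>: "\<gamma> \<ge> 0"
    and objective: "- inner G e \<le> P" and penalty: "D \<le> inner h e + c"
    and direction: "(norm (G + \<gamma> *\<^sub>R h))\<^sup>2 \<le> Q"
  shows "(norm (e - s *\<^sub>R (G + \<gamma> *\<^sub>R h)))\<^sup>2
    \<le> (norm e)\<^sup>2 + 2 * s * P + 2 * s * \<gamma> * c - 2 * s * \<gamma> * D + s\<^sup>2 * Q"
proof -
  have "(norm (e - s *\<^sub>R (G + \<gamma> *\<^sub>R h)))\<^sup>2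
      = (norm e)\<^sup>2 - 2 * s * inner G e - 2 * s * \<gamma> * inner h e + s\<^sup>2 * (norm (G + \<gamma> *\<^sub>R h))\<^sup>2"
    unfolding power2_norm_eq_inner
    by (simp add: inner_diff_left inner_diff_right inner_add_left inner_commute
        power2_eq_square algebra_simps)
  moreover note mult_left_mono[OF objective, of "2 * s"] mult_left_mono[OF penalty, of "2 * s * \<gamma>"]
    mult_left_mono[OF direction, of "s\<^sup>2"]
  ultimately show ?thesis using s \<gamma> by (simp add: algebra_simps)
qed

theorem lemma9:
  fixes f :: "'a::euclidean_space \<Rightarrow> real"
    and m :: nat and a :: "nat \<Rightarrow> 'a" and b :: "nat \<Rightarrow> real"
    and M1 M2 B \<rho> :: real
    and \<gamma> \<delta> s :: "nat \<Rightarrow> real"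
    and x g :: "nat \<Rightarrow> 'a" and idx :: "nat \<Rightarrow> nat"
  assumes a_nz: "\<And>i. i \<in> {1..m} \<Longrightarrow> a i \<noteq> 0"
    and m_pos: "m \<ge> 1"
    and X_ne: "feas m a b \<noteq> {}"
    and f_convex: "convex_on UNIV f"
    and f_level: "\<And>c. bounded {y. f y \<le> c}"
    and M1_pos: "M1 > 0" and M2_pos: "M2 > 0"
    and subgrad_growth: "\<And>y v. v \<in> subdiff f y \<Longrightarrow> norm v \<le> M1 * norm y + M2"
    and \<gamma>_pos: "\<And>k. \<gamma> k > 0" and \<delta>_pos: "\<And>k. \<delta> k > 0" and s_pos: "\<And>k. s k > 0"
    and B_pos: "B > 0"
    and B_bd: "\<And>xs v. xs \<in> optset f (feas m a b) \<Longrightarrow> norm xs \<le> B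
                 \<and> (v \<in> subdiff f xs \<longrightarrow> norm v \<le> B)"
    and \<rho>_range: "0 \<le> \<rho>" "\<rho> \<le> 1"
    and idx_range: "\<And>k. k \<ge> 1 \<Longrightarrow> idx k \<in> {1..m}"
    and g_sub: "\<And>k. k \<ge> 1 \<Longrightarrow> g k \<in> subdiff f (x k)"
    and iter: "\<And>k. k \<ge> 1 \<Longrightarrow>
       x (Suc k) = x k - s k *\<^sub>R (g k + \<gamma> k *\<^sub>R grad_hpen (\<delta> k) (a (idx k)) (b (idx k)) (x k))"
  shows "\<forall>xs \<in> optset f (feas m a b). \<forall>k\<ge>1.
    (norm (x (Suc k) - xs))\<^sup>2 \<le>
       (1 + 4 * (s k)\<^sup>2 * M1\<^sup>2) * (norm (x k - xs))\<^sup>2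
     + 2 * s k * ((1 - \<rho>) * B + \<rho> * (M1 * B + M2)) * infdist (x k) (feas m a b)
     + 2 * s k * \<rho> * (optval f (feas m a b) - f (closest_point (feas m a b) (x k)))
     + 2 * s k * \<rho> * M1 * norm (x k - xs) * infdist (x k) (feas m a b)
     + s k * \<gamma> k * \<delta> k / (2 * Min ((\<lambda>i. norm (a i)) ` {1..m}))
     - 2 * s k * \<gamma> k * infdist (x k) (halfspace (a (idx k)) (b (idx k)))
     + 4 * (s k)\<^sup>2 * (M1\<^sup>2 * B\<^sup>2 + M2\<^sup>2 + (\<gamma> k)\<^sup>2)"
proof (intro ballI allI impI, goal_cases)
  case (1 xs k)
  then have opt: "xs \<in> optset f (feas m a b)" and k: "k \<ge> 1" by simp_all
  define i where "i = idx k"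
  define h where "h = grad_hpen (\<delta> k) (a i) (b i) (x k)"
  define \<alpha> where "\<alpha> = Min ((\<lambda>i. norm (a i)) ` {1..m})"
  define e where "e = x k - xs"
  have i: "i \<in> {1..m}" using idx_range[OF k] by (simp add: i_def)
  have \<alpha>: "0 < \<alpha>" "\<alpha> \<le> norm (a i)"
    using i a_nz m_pos unfolding \<alpha>_def by (auto simp: Min_gr_iff intro!: Min_le)
  have xs_i: "xs \<in> halfspace (a i) (b i)" using opt i unfolding optset_def feas_def by auto
  have objective: "- inner (g k) e \<le> ((1 - \<rho>) * B + \<rho> * (M1 * B + M2)) * infdist (x k) (feas m a b)
      + \<rho> * (optval f (feas m a b) - f (closest_point (feas m a b) (x k)))
      + \<rho> * M1 * norm e * infdist (x k) (feas m a b)"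
    unfolding e_def using B_bd[OF opt] M1_pos
    by (intro neg_inner_subgrad_le[OF f_convex closed_feas convex_feas opt _ _ subgrad_growth
          _ \<rho>_range g_sub[OF k]]) auto
  have "\<delta> k / (4 * norm (a i)) \<le> \<delta> k / (4 * \<alpha>)"
    using \<alpha> \<delta>_pos[of k] by (intro frac_le) auto
  then have penalty: "infdist (x k) (halfspace (a i) (b i)) \<le> inner h e + \<delta> k / (4 * \<alpha>)"
    using infdist_halfspace_le_inner_grad_hpen[OF a_nz[OF i] \<delta>_pos[of k] xs_i, of "x k"]
    unfolding h_def e_def by linarith
  have direction: "(norm (g k + \<gamma> k *\<^sub>R h))\<^sup>2
      \<le> 4 * M1\<^sup>2 * (norm e)\<^sup>2 + 4 * (M1\<^sup>2 * B\<^sup>2 + M2\<^sup>2 + (\<gamma> k)\<^sup>2)"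
    unfolding e_def h_def using B_bd[OF opt] M1_pos \<gamma>_pos[of k]
    by (intro norm_add_scaleR_sq_le subgrad_growth[OF g_sub[OF k]]
        norm_grad_hpen_le[OF \<delta>_pos a_nz[OF i]]) auto
  have step: "x (Suc k) - xs = e - s k *\<^sub>R (g k + \<gamma> k *\<^sub>R h)"
    unfolding iter[OF k] e_def h_def i_def by simp
  show ?case
    using norm_step_sq_le[OF less_imp_le[OF s_pos[of k]] less_imp_le[OF \<gamma>_pos[of k]]
        objective penalty direction]
    unfolding step[symmetric] e_def[symmetric] \<alpha>_def[symmetric] i_def[symmetric]
    by (simp add: algebra_simps)
qed

end
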